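(* Let $\gamma$ be a translation-invariant (nonnull) specification and $\mu\in\mathcal M^+_{1,\mathrm{inv}}$ with $\mu(\Omega^{\le0}_\gamma)=1$. Then: (1) uniformly in $\omega\in\Omega$, $$\lim_{n\to\infty}\frac1{|\Lambda_n|}\int_\Omega\log\frac{\gamma_{\Lambda_n}(\sigma|\omega)}{\gamma_{\Lambda_n}(+|\omega)}\,\mu(d\sigma)=\int_\Omega\log\frac{\gamma_0(\sigma^+|\sigma^+)}{\gamma_0(+|\sigma^+)}\,\mu(d\sigma);$$ (2) for every $\nu\in\mathcal G(\gamma)$, $$\lim_{n\to\infty}\frac1{|\Lambda_n|}\int_\Omega\log\frac{\nu(\sigma_{\Lambda_n})}{\nu(+_{\Lambda_n})}\,\mu(d\sigma)=\int_\Omega\log\frac{\gamma_0(\sigma^+|\sigma^+)}{\gamma_0(+|\sigma^+)}\,\mu(d\sigma).$$ In particular, the limit in (2) depends only on the pair $(\gamma,\mu)$.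
   Context: Let $E$ be a finite set containing a distinguished element $+1$, $\Omega=E^{\mathbb Z^d}$ with product topology and Borel $\sigma$-field $\mathcal F$; $\mathcal F_\Lambda$ is generated by the coordinates in $\Lambda$; $\mathcal S$ = finite subsets of $\mathbb Z^d$; $\mu(\sigma_\Lambda)=\mu(\{\omega:\omega_\Lambda=\sigma_\Lambda\})$; local functions are $\mathcal F_\Delta$-measurable for some finite $\Delta$. Translations $(\tau_x\omega)(y)=\omega(x+y)$; $\mathcal M^+_{1,\mathrm{inv}}$ = translation-invariant probability measures. A specification $\gamma=(\gamma_\Lambda)_{\Lambda\in\mathcal S}$ is a family of probability kernels, $\mathcal F_{\Lambda^c}$-measurable in the boundary condition, proper ($\gamma_\Lambda(B|\omega)=1_B(\omega)$ for $B\in\mathcal F_{\Lambda^c}$), consistent ($\int\gamma_\Lambda(A|\omega')\gamma_{\Lambda'}(d\omega'|\omega)=\gamma_{\Lambda'}(A|\omega)$ for $\Lambda\subset\Lambda'$ and all $\omega$), and nonnull ($0<a_\Lambda<\inf_{\sigma,\eta}\gamma_\Lambda(\sigma_\Lambda|\eta)\le\sup_{\sigma,\eta}\gamma_\Lambda(\sigma_\Lambda|\eta)<b_\Lambda<1$); translation-invariant means $\gamma_{\Lambda+x}(A|\omega)=\gamma_\Lambda(\tau_xA|\tau_x\omega)$. $\gamma_\Lambda(\sigma|\omega)$ denotes $\gamma_\Lambda(\{\xi:\xi_\Lambda=\sigma_\Lambda\}|\omega)$, and $\gamma_0(\sigma|\omega)=\gamma_{\{0\}}(\{\xi:\xi(0)=\sigma(0)\}|\omega)$.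 $\mathcal G(\gamma)$: probability measures $\nu$ with $\nu(A|\mathcal F_{\Lambda^c})=\gamma_\Lambda(A|\cdot)$ $\nu$-a.s. for all $\Lambda,A$. $\Omega_\gamma$ is the set of $\omega$ such that $\omega'\mapsto\int f\,d\gamma_\Lambda(\cdot|\omega')$ is continuous at $\omega$ for all $\Lambda\in\mathcal S$ and local $f$. $+$ is the configuration identically $+1$, $+_\Lambda$ its restriction. With $\le$ the lexicographic order, $\sigma^+(x)=\sigma(x)$ if $x\le0$ and $+1$ if $x>0$; $\Omega^{\le0}_\gamma=\{\sigma:\sigma^+\in\Omega_\gamma\}$. $\Lambda_n=[-n,n]^d\cap\mathbb Z^d$. *)

theory Defs
  imports "HOL-Probability.Probability"
begin

text \<open>Sites are the lattice Z^d, rendered as int^'d with 'd a finite linearly ordered index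
type (the order on 'd fixes the coordinate order used by the lexicographic order).\<close>

type_synonym ('e, 'd) config = "(int ^ 'd) \<Rightarrow> 'e"

text \<open>The measurable space Omega with the product sigma-field (= Borel field of the
product topology, since 'e is finite and discrete).\<close>
definition Omega :: "('e, 'd::finite) config measure" where
  "Omega = PiM UNIV (\<lambda>_. count_space UNIV)"

definition F_on :: "(int ^ 'd) set \<Rightarrow> ('e, 'd::finite) config measure" where
  "F_on L = vimage_algebra UNIV (\<lambda>\<omega>. restrict \<omega> L) (PiM L (\<lambda>_. count_space UNIV))"

definition Otop :: "('e, 'd::finite) config topology" where
  "Otop = product_topology (\<lambda>_. discrete_topology UNIV) UNIV"

definition finS :: "(int ^ 'd::finite) set \<Rightarrow> bool" where
  "finS L \<longleftrightarrow> finite L \<and> L \<noteq> {}"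

definition cyl :: "(int ^ 'd::finite) set \<Rightarrow> ('e, 'd) config \<Rightarrow> ('e, 'd) config set" where
  "cyl L \<sigma> = {\<xi>. \<forall>x\<in>L. \<xi> x = \<sigma> x}"

definition tau :: "int ^ 'd::finite \<Rightarrow> ('e, 'd) config \<Rightarrow> ('e, 'd) config" where
  "tau x \<omega> = (\<lambda>y. \<omega> (x + y))"

type_synonym ('e, 'd) spec = "(int ^ 'd) set \<Rightarrow> ('e, 'd) config \<Rightarrow> ('e, 'd) config measure"

text \<open>A (nonnull) specification: gamma L omega is the probability measure gamma_L( . | omega).\<close>
definition is_specification :: "('e, 'd::finite) spec \<Rightarrow> bool" where
  "is_specification \<gamma> \<longleftrightarrow>
     (\<forall>L. finS L \<longrightarrow>
        (\<forall>\<omega>. prob_space (\<gamma> L \<omega>) \<and> sets (\<gamma> L \<omega>) = sets Omega)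
      \<and> (\<forall>A\<in>sets Omega. (\<lambda>\<omega>. measure (\<gamma> L \<omega>) A) \<in> borel_measurable (F_on (- L)))
      \<and> (\<forall>B\<in>sets (F_on (- L)). \<forall>\<omega>. measure (\<gamma> L \<omega>) B = indicator B \<omega>)
      \<and> (\<exists>a b. 0 < a \<and> a < (INF \<sigma>. INF \<eta>. measure (\<gamma> L \<eta>) (cyl L \<sigma>))
              \<and> (SUP \<sigma>. SUP \<eta>. measure (\<gamma> L \<eta>) (cyl L \<sigma>)) < b \<and> b < 1))
   \<and> (\<forall>L L'. finS L \<and> finS L' \<and> L \<subseteq> L' \<longrightarrow>
        (\<forall>A\<in>sets Omega. \<forall>\<omega>.
           (\<integral>\<omega>'. measure (\<gamma> L \<omega>') A \<partial>(\<gamma> L' \<omega>)) = measure (\<gamma> L' \<omega>) A))"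

definition spec_translation_invariant :: "('e, 'd::finite) spec \<Rightarrow> bool" where
  "spec_translation_invariant \<gamma> \<longleftrightarrow>
     (\<forall>L x A \<omega>. finS L \<and> A \<in> sets Omega \<longrightarrow>
        measure (\<gamma> ((\<lambda>y. y + x) ` L) \<omega>) A = measure (\<gamma> L (tau x \<omega>)) (tau x ` A))"

definition inv_prob :: "('e, 'd::finite) config measure \<Rightarrow> bool" where
  "inv_prob \<mu> \<longleftrightarrow> prob_space \<mu> \<and> sets \<mu> = sets Omega \<and>
     (\<forall>x. distr \<mu> Omega (tau x) = \<mu>)"

definition Gibbs :: "('e, 'd::finite) spec \<Rightarrow> ('e, 'd) config measure set" where
  "Gibbs \<gamma> = {\<nu>. prob_space \<nu> \<and> sets \<nu> = sets Omega \<and>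
     (\<forall>L A. finS L \<and> A \<in> sets Omega \<longrightarrow>
        (AE \<omega> in \<nu>. real_cond_exp \<nu> (F_on (- L)) (indicator A) \<omega> = measure (\<gamma> L \<omega>) A))}"

definition local_fun :: "(('e, 'd::finite) config \<Rightarrow> real) \<Rightarrow> bool" where
  "local_fun f \<longleftrightarrow> (\<exists>D. finite D \<and> f \<in> borel_measurable (F_on D))"

definition Omega_gamma :: "('e, 'd::finite) spec \<Rightarrow> ('e, 'd) config set" where
  "Omega_gamma \<gamma> = {\<omega>. \<forall>L f. finS L \<and> local_fun f \<longrightarrow>
      limitin euclideanreal (\<lambda>\<omega>'. \<integral>\<xi>. f \<xi> \<partial>(\<gamma> L \<omega>'))
        (\<integral>\<xi>. f \<xi> \<partial>(\<gamma> L \<omega>)) (nhdsin Otop \<omega>)}"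

definition lex_le :: "int ^ ('d::{finite,linorder}) \<Rightarrow> int ^ ('d::{finite,linorder}) \<Rightarrow> bool" where
  "lex_le x y \<longleftrightarrow> x = y \<or> (\<exists>i. x $ i < y $ i \<and> (\<forall>j<i. x $ j = y $ j))"

text \<open>sigma^+ : sigma on {x <= 0}, +1 (= p) on {x > 0}.\<close>
definition plus_ext :: "'e \<Rightarrow> ('e, 'd::{finite,linorder}) config \<Rightarrow> ('e, 'd) config" where
  "plus_ext p \<sigma> = (\<lambda>x. if lex_le x 0 then \<sigma> x else p)"

definition Lam :: "nat \<Rightarrow> (int ^ 'd::finite) set" where
  "Lam n = {x. \<forall>i. \<bar>x $ i\<bar> \<le> int n}"

definition rhs :: "'e \<Rightarrow> ('e, 'd::{finite,linorder}) spec \<Rightarrow> ('e, 'd) config measure \<Rightarrow> real" where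
  "rhs p \<gamma> \<mu> = (\<integral>\<sigma>. ln (measure (\<gamma> {0} (plus_ext p \<sigma>)) (cyl {0} (plus_ext p \<sigma>))
                      / measure (\<gamma> {0} (plus_ext p \<sigma>)) (cyl {0} (\<lambda>_. p))) \<partial>\<mu>)"

end

theory Submission
  imports Defs
begin

text \<open>
  Switching the sites of \<open>\<Lambda>\<^sub>n\<close> from \<open>+\<close> (the constant configuration \<open>p\<close>) to \<open>\<sigma>\<close>
  one at a time, in lexicographic order, writes \<open>log (\<gamma>\<^sub>\<Lambda>(\<sigma>|\<omega>) / \<gamma>\<^sub>\<Lambda>(+|\<omega>))\<close> as a
  sum of single-site log-ratios (consistency and properness of \<open>\<gamma>\<close>). By translation
  invariance the term of site \<open>x\<close> is \<open>F(\<tau>\<^sub>x\<eta>\<^sub>x)\<close>, where \<open>F(\<zeta>) = log (\<gamma>\<^sub>0(\<zeta>|\<zeta>) / \<gamma>\<^sub>0(+|\<zeta>))\<close>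
  and \<open>\<eta>\<^sub>x\<close> equals \<open>\<sigma>\<close> at the sites \<open>\<le> x\<close> and \<open>+\<close> at the other sites of \<open>\<Lambda>\<^sub>n\<close>.
  If \<open>x\<close> lies in \<open>\<Lambda>\<^bsub>n-R\<^esub>\<close>, then \<open>\<tau>\<^sub>x\<eta>\<^sub>x\<close> agrees with \<open>(\<tau>\<^sub>x\<sigma>)\<^sup>+\<close> on \<open>\<Lambda>\<^sub>R\<close>, so the term
  differs from \<open>F((\<tau>\<^sub>x\<sigma>)\<^sup>+)\<close> by at most the oscillation of \<open>F\<close> on that cylinder; the
  remaining \<open>|\<Lambda>\<^sub>n| - |\<Lambda>\<^bsub>n-R\<^esub>|\<close> boundary terms are bounded by nonnullness. None of
  these bounds depends on \<open>\<omega>\<close>. Integrating against the invariant \<open>\<mu>\<close>, every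
  \<open>F((\<tau>\<^sub>x\<sigma>)\<^sup>+)\<close> contributes the right-hand side, while the integrated oscillation tends
  to 0 as \<open>R \<rightarrow> \<infinity>\<close> by dominated convergence, since \<open>\<sigma>\<^sup>+\<close> is a continuity point for
  \<open>\<mu>\<close>-almost every \<open>\<sigma>\<close>. For \<open>\<nu> \<in> \<G>(\<gamma>)\<close> one has \<open>\<nu>(\<sigma>\<^sub>\<Lambda>) = \<integral>\<gamma>\<^sub>\<Lambda>(\<sigma>|\<omega>) \<nu>(d\<omega>)\<close>,
  and the pointwise two-sided bounds on \<open>\<gamma>\<^sub>\<Lambda>(\<sigma>|\<omega>) / \<gamma>\<^sub>\<Lambda>(+|\<omega>)\<close> survive this averaging.
\<close>

lemma space_Omega [simp]: "space (Omega :: ('e, 'd::finite) config measure) = UNIV"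
  by (simp add: Omega_def space_PiM)

lemma space_F_on [simp]: "space (F_on L :: ('e, 'd::finite) config measure) = UNIV"
  by (simp add: F_on_def)

lemma measurable_coordinate_Omega [measurable]:
  "(\<lambda>\<omega>. \<omega> y) \<in> measurable (Omega :: ('e, 'd::finite) config measure) (count_space UNIV)"
  unfolding Omega_def by (rule measurable_component_singleton) simp

lemma measurable_restrict_F_on:
  "(\<lambda>\<omega>. restrict \<omega> S) \<in> measurable (F_on S :: ('e, 'd::finite) config measure) (PiM S (\<lambda>_. count_space UNIV))"
  unfolding F_on_def by (rule measurable_vimage_algebra1) (auto simp: space_PiM)

lemma sets_F_on:
  "sets (F_on S :: ('e, 'd::finite) config measure)
     = (\<lambda>A. (\<lambda>\<omega>. restrict \<omega> S) -` A) ` sets (PiM S (\<lambda>_. count_space UNIV))"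
  unfolding F_on_def by (subst sets_vimage_algebra2) (auto simp: space_PiM)

lemma sets_F_on_subset_Omega: "sets (F_on S :: ('e, 'd::finite) config measure) \<subseteq> sets Omega"
proof
  fix A assume "A \<in> sets (F_on S :: ('e, 'd) config measure)"
  then obtain B where B: "B \<in> sets (PiM S (\<lambda>_. count_space UNIV))" and A: "A = (\<lambda>\<omega>. restrict \<omega> S) -` B"
    unfolding sets_F_on by auto
  have "(\<lambda>\<omega>. restrict \<omega> S) \<in> measurable (Omega :: ('e, 'd) config measure) (PiM S (\<lambda>_. count_space UNIV))"
    unfolding Omega_def by (rule measurable_restrict_subset) simp
  from measurable_sets[OF this B] show "A \<in> sets Omega" using A by simp
qed

lemma measurable_F_on_imp_Omega:
  "f \<in> measurable (F_on S :: ('e, 'd::finite) config measure) N \<Longrightarrow> f \<in> measurable Omega N"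
  using sets_F_on_subset_Omega unfolding measurable_def by auto

lemma F_on_measurable_local:
  fixes f :: "('e, 'd::finite) config \<Rightarrow> real"
  assumes "f \<in> borel_measurable (F_on S)" and "\<And>x. x \<in> S \<Longrightarrow> \<omega> x = \<omega>' x"
  shows "f \<omega> = f \<omega>'"
proof -
  have "f -` {f \<omega>} \<in> sets (F_on S :: ('e, 'd) config measure)"
    using measurable_sets[OF assms(1), of "{f \<omega>}"] by simp
  then obtain B where B: "f -` {f \<omega>} = (\<lambda>\<omega>. restrict \<omega> S) -` B"
    unfolding sets_F_on by auto
  have "restrict \<omega> S = restrict \<omega>' S" using assms(2) by (auto simp: restrict_def)
  moreover have "\<omega> \<in> f -` {f \<omega>}" by simp
  ultimately have "\<omega>' \<in> f -` {f \<omega>}" unfolding B by auto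
  then show ?thesis by simp
qed

lemma cyl_in_F_on:
  assumes "finite D" "D \<subseteq> S"
  shows "cyl D \<sigma> \<in> sets (F_on S :: ('e, 'd::finite) config measure)"
proof -
  have "cyl D \<sigma> = {\<omega> \<in> space (F_on S :: ('e, 'd) config measure). \<forall>x\<in>D. \<omega> x = \<sigma> x}"
    by (auto simp: cyl_def)
  also have "\<dots> \<in> sets (F_on S)"
  proof (rule sets.sets_Collect_finite_All[OF _ assms(1)])
    fix x assume "x \<in> D"
    then have "(\<lambda>\<omega>. \<omega> x) \<in> measurable (F_on S :: ('e, 'd) config measure) (count_space UNIV)"
      using measurable_comp[OF measurable_restrict_F_on measurable_component_singleton, of x S]
        assms(2) by (auto simp: comp_def)
    then show "{\<omega> \<in> space (F_on S :: ('e, 'd) config measure). \<omega> x = \<sigma> x} \<in> sets (F_on S)"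
      by measurable
  qed
  finally show ?thesis .
qed

lemma cyl_in_Omega [measurable]:
  "finite D \<Longrightarrow> cyl D \<sigma> \<in> sets (Omega :: ('e, 'd::finite) config measure)"
  using cyl_in_F_on[of D UNIV] sets_F_on_subset_Omega by blast

lemma cyl_cong: "(\<And>x. x \<in> L \<Longrightarrow> \<sigma> x = \<sigma>' x) \<Longrightarrow> cyl L \<sigma> = cyl L \<sigma>'"
  by (auto simp: cyl_def)

lemma cyl_antimono: "L \<subseteq> L' \<Longrightarrow> cyl L' \<sigma> \<subseteq> cyl L \<sigma>"
  by (auto simp: cyl_def)

lemma self_in_cyl [simp]: "\<sigma> \<in> cyl L \<sigma>"
  by (simp add: cyl_def)

lemma finite_range_cyl:
  assumes "finite D"
  shows "finite (range (cyl D :: ('e::finite, 'd::finite) config \<Rightarrow> _))"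
proof -
  have "range (cyl D :: ('e, 'd) config \<Rightarrow> _) \<subseteq> cyl D ` (PiE D (\<lambda>_. UNIV))"
  proof
    fix C assume "C \<in> range (cyl D :: ('e, 'd) config \<Rightarrow> _)"
    then obtain \<sigma> where "C = cyl D \<sigma>" by blast
    moreover have "cyl D \<sigma> = cyl D (restrict \<sigma> D)" by (rule cyl_cong) simp
    ultimately show "C \<in> cyl D ` (PiE D (\<lambda>_. UNIV))" by auto
  qed
  then show ?thesis by (rule finite_subset) (use assms in \<open>simp add: finite_PiE\<close>)
qed

lemma measurable_Omega_local:
  assumes "finite D" and local: "\<And>\<sigma> \<sigma>'. (\<And>x. x \<in> D \<Longrightarrow> \<sigma> x = \<sigma>' x) \<Longrightarrow> f \<sigma> = f \<sigma>'"
    and space: "\<And>\<sigma>. f \<sigma> \<in> space N"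
  shows "f \<in> measurable (Omega :: ('e::finite, 'd::finite) config measure) N"
proof (rule measurableI)
  fix B assume "B \<in> sets N"
  have "f -` B \<inter> space Omega = \<Union> (cyl D ` {\<sigma>. f \<sigma> \<in> B})"
  proof (intro set_eqI iffI)
    fix \<omega> assume "\<omega> \<in> f -` B \<inter> space Omega"
    then show "\<omega> \<in> \<Union> (cyl D ` {\<sigma>. f \<sigma> \<in> B})" using self_in_cyl by blast
  next
    fix \<omega> assume "\<omega> \<in> \<Union> (cyl D ` {\<sigma>. f \<sigma> \<in> B})"
    then obtain \<sigma> where "f \<sigma> \<in> B" "\<omega> \<in> cyl D \<sigma>" by blast
    then show "\<omega> \<in> f -` B \<inter> space Omega" using local[of \<omega> \<sigma>] by (simp add: cyl_def)
  qed
  moreover have "finite (cyl D ` {\<sigma>. f \<sigma> \<in> B})"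
    by (rule finite_subset[OF _ finite_range_cyl[OF \<open>finite D\<close>]]) blast
  moreover have "cyl D ` {\<sigma>. f \<sigma> \<in> B} \<subseteq> sets Omega"
    using cyl_in_Omega[OF \<open>finite D\<close>] by blast
  ultimately show "f -` B \<inter> space Omega \<in> sets Omega"
    by (metis sets.finite_Union)
qed (rule space)

lemma measurable_cyl_fun:
  "finite D \<Longrightarrow> (\<lambda>\<sigma>. f (cyl D \<sigma>) :: real) \<in> borel_measurable (Omega :: ('e::finite, 'd::finite) config measure)"
  by (rule measurable_Omega_local[of D]) (auto cong: cyl_cong)

lemma measurable_tau [measurable]: "tau x \<in> measurable (Omega :: ('e, 'd::finite) config measure) Omega"
  unfolding Omega_def tau_def
  by (rule measurable_PiM_single') (auto intro: measurable_component_singleton simp: space_PiM)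

lemma tau_const [simp]: "tau x (\<lambda>_. p) = (\<lambda>_. p)"
  by (simp add: tau_def)

lemma tau_image_cyl_singleton: "tau x ` cyl {x} \<theta> = cyl {0} (tau x \<theta>)"
proof (intro set_eqI iffI)
  fix \<xi> assume "\<xi> \<in> cyl {0} (tau x \<theta>)"
  then have "tau (- x) \<xi> \<in> cyl {x} \<theta>" "\<xi> = tau x (tau (- x) \<xi>)"
    by (auto simp: cyl_def tau_def)
  then show "\<xi> \<in> tau x ` cyl {x} \<theta>" by blast
qed (auto simp: cyl_def tau_def)

lemma measurable_plus_ext [measurable]:
  "plus_ext p \<in> measurable (Omega :: ('e, 'd::{finite,linorder}) config measure) Omega"
  unfolding plus_ext_def Omega_def
  by (rule measurable_PiM_single') (auto simp: space_PiM Omega_def[symmetric])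

lemma lex_le_refl [simp]: "lex_le x x"
  by (simp add: lex_le_def)

lemma lex_le_antisym: assumes "lex_le x y" "lex_le y x" shows "x = y"
proof (rule ccontr)
  assume "x \<noteq> y"
  then obtain i k where i: "x $ i < y $ i" "\<forall>j<i. x $ j = y $ j"
    and k: "y $ k < x $ k" "\<forall>j<k. y $ j = x $ j"
    using assms by (auto simp: lex_le_def)
  then show False by (cases i k rule: linorder_cases) auto
qed

lemma lex_le_trans: assumes "lex_le x y" "lex_le y z" shows "lex_le x z"
proof (cases "x = y \<or> y = z")
  case False
  then obtain i k where i: "x $ i < y $ i" "\<forall>j<i. x $ j = y $ j"
    and k: "y $ k < z $ k" "\<forall>j<k. y $ j = z $ j"
    using assms by (auto simp: lex_le_def)
  have "x $ min i k < z $ min i k \<and> (\<forall>j<min i k. x $ j = z $ j)"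
    using i k by (cases i k rule: linorder_cases) (auto simp: min_def)
  then show ?thesis unfolding lex_le_def by blast
qed (use assms in auto)

lemma lex_le_total: "lex_le x y \<or> lex_le y x"
proof (cases "x = y")
  case False
  define i where "i = Min {i. x $ i \<noteq> y $ i}"
  have "x $ i \<noteq> y $ i" "\<forall>j<i. x $ j = y $ j"
    using False Min_in[of "{i. x $ i \<noteq> y $ i}"] Min_le[of "{i. x $ i \<noteq> y $ i}"]
    unfolding i_def by (auto simp: vec_eq_iff)
  then show ?thesis unfolding lex_le_def by (metis linorder_neqE)
qed (simp add: lex_le_def)

interpretation lex: linorder lex_le "\<lambda>x y. lex_le x y \<and> x \<noteq> y"
proof
  fix x y z :: "int ^ 'd::{finite,linorder}"
  show "(lex_le x y \<and> x \<noteq> y) \<longleftrightarrow> lex_le x y \<and> \<not> lex_le y x"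
    using lex_le_antisym by auto
  show "lex_le x x" by simp
  show "lex_le x y \<Longrightarrow> lex_le y z \<Longrightarrow> lex_le x z" by (rule lex_le_trans)
  show "lex_le x y \<Longrightarrow> lex_le y x \<Longrightarrow> x = y" by (rule lex_le_antisym)
  show "lex_le x y \<or> lex_le y x" by (rule lex_le_total)
qed

lemma lex_le_translate_0: "lex_le (x + y) x \<longleftrightarrow> lex_le y 0"
proof -
  have "(x + y = x) \<longleftrightarrow> y = 0" "\<And>i. (x + y) $ i < x $ i \<longleftrightarrow> y $ i < 0"
    "\<And>i. (x + y) $ i = x $ i \<longleftrightarrow> y $ i = 0"
    by (auto simp: add.commute)
  then show ?thesis unfolding lex_le_def by simp
qed

lemma Lam_eq_image: "(Lam n :: (int ^ 'd::finite) set) = vec_lambda ` PiE UNIV (\<lambda>_. {- int n..int n})"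
proof -
  have "\<bar>t\<bar> \<le> int n \<longleftrightarrow> t \<in> {- int n..int n}" for t :: int
    by auto
  then have Lam: "x \<in> Lam n \<longleftrightarrow> vec_nth x \<in> PiE UNIV (\<lambda>_. {- int n..int n})" for x :: "int ^ 'd"
    by (simp add: Lam_def PiE_iff)
  show ?thesis
  proof (intro set_eqI iffI)
    fix x :: "int ^ 'd" assume "x \<in> Lam n"
    then show "x \<in> vec_lambda ` PiE UNIV (\<lambda>_. {- int n..int n})"
      using Lam by (intro rev_image_eqI[of "vec_nth x"]) simp_all
  next
    fix x :: "int ^ 'd" assume "x \<in> vec_lambda ` PiE UNIV (\<lambda>_. {- int n..int n})"
    then obtain f where "f \<in> PiE UNIV (\<lambda>_. {- int n..int n})" "x = vec_lambda f" by blast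
    then show "x \<in> Lam n" using Lam by (simp add: vec_lambda_inverse)
  qed
qed

lemma finite_Lam [simp]: "finite (Lam n :: (int ^ 'd::finite) set)"
  unfolding Lam_eq_image by (simp add: finite_PiE)

lemma card_Lam: "card (Lam n :: (int ^ 'd::finite) set) = (2 * n + 1) ^ CARD('d)"
proof -
  have "card (Lam n :: (int ^ 'd) set) = card (PiE (UNIV :: 'd set) (\<lambda>_. {- int n..int n}))"
    unfolding Lam_eq_image by (rule card_image) (simp add: inj_on_def vec_lambda_inject)
  also have "\<dots> = (2 * n + 1) ^ CARD('d)"
    by (simp add: card_PiE nat_add_distrib nat_mult_distrib)
  finally show ?thesis .
qed

lemma zero_in_Lam [simp]: "0 \<in> Lam n"
  by (simp add: Lam_def)

lemma finS_Lam [simp]: "finS (Lam n)"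
  unfolding finS_def using zero_in_Lam by (metis empty_iff finite_Lam)

lemma finS_singleton [simp]: "finS {x}"
  by (simp add: finS_def)

lemma Lam_mono: "m \<le> n \<Longrightarrow> Lam m \<subseteq> Lam n"
  unfolding Lam_def by (auto intro: order_trans)

lemma Lam_add:
  assumes "R \<le> n" "x \<in> Lam (n - R)" "y \<in> Lam R"
  shows "x + y \<in> Lam n"
  unfolding Lam_def
proof (intro CollectI allI)
  fix i
  have "\<bar>x $ i\<bar> \<le> int (n - R)" "\<bar>y $ i\<bar> \<le> int R"
    using assms(2,3) by (simp_all add: Lam_def)
  moreover have "int (n - R) = int n - int R"
    using assms(1) by (rule of_nat_diff)
  ultimately show "\<bar>(x + y) $ i\<bar> \<le> int n"
    using abs_triangle_ineq[of "x $ i" "y $ i"] unfolding vector_add_component by linarith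
qed

lemma finite_subset_Lam: "finite D \<Longrightarrow> \<exists>R. D \<subseteq> (Lam R :: (int ^ 'd::finite) set)"
proof (induction D rule: finite_induct)
  case (insert y D)
  then obtain R where R: "D \<subseteq> Lam R" by blast
  define R' where "R' = Max (range (\<lambda>i. nat \<bar>y $ i\<bar>))"
  have "nat \<bar>y $ i\<bar> \<le> R'" for i
    unfolding R'_def by (rule Max_ge) auto
  then have "y \<in> Lam R'"
    unfolding Lam_def by (simp add: nat_le_iff)
  then have "insert y D \<subseteq> Lam (max R R')"
    using R Lam_mono[of R "max R R'"] Lam_mono[of R' "max R R'"] by auto
  then show ?case by blast
qed simp

lemma card_Lam_ratio_tendsto_1:
  "(\<lambda>n. real (card (Lam (n - R) :: (int ^ 'd::finite) set)) / real (card (Lam n :: (int ^ 'd) set)))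
     \<longlonglongrightarrow> 1"
proof -
  define h where "h n = real (2 * (n - R) + 1) / real (2 * n + 1)" for n
  have "(\<lambda>n. 1 - h n) \<longlonglongrightarrow> 0"
  proof (rule tendsto_sandwich[OF _ _ tendsto_const lim_const_over_n])
    show "\<forall>\<^sub>F n in sequentially. 0 \<le> 1 - h n"
      by (rule always_eventually) (auto simp: h_def field_simps)
    show "\<forall>\<^sub>F n in sequentially. 1 - h n \<le> real R / real n"
    proof (rule eventually_sequentiallyI[of "Suc R"])
      fix n assume n: "Suc R \<le> n"
      then have "1 - h n = 2 * real R / (2 * real n + 1)"
        by (simp add: h_def of_nat_diff field_simps)
      also have "\<dots> \<le> real R / real n"
        using n by (simp add: field_simps)
      finally show "1 - h n \<le> real R / real n" .
    qed
  qed
  from tendsto_diff[OF tendsto_const[of 1] this] have "h \<longlonglongrightarrow> 1"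
    by simp
  then have "(\<lambda>n. h n ^ CARD('d)) \<longlonglongrightarrow> 1 ^ CARD('d)"
    by (rule tendsto_power)
  then show ?thesis by (simp add: card_Lam h_def power_divide)
qed

section \<open>Nonnull specifications\<close>

lemma (in prob_space) prob_Int_trivial_event:
  assumes "B \<in> events" "C \<in> events" and trivial: "prob B = indicator B \<omega>"
  shows "prob (B \<inter> C) = indicator B \<omega> * prob C"
proof (cases "\<omega> \<in> B")
  case True
  then have "AE x in M. x \<in> B"
    using prob_eq_1 assms by simp
  then have "prob (B \<inter> C) = prob C"
    using assms by (intro finite_measure_eq_AE) auto
  then show ?thesis using True by simp
next
  case False
  have "prob (B \<inter> C) \<le> prob B"
    using assms by (intro finite_measure_mono) auto
  then show ?thesis using False trivial by (simp add: measure_le_0_iff)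
qed

lemma eventually_nhdsin_Otop_cyl:
  assumes "eventually P (nhdsin Otop \<omega>)"
  shows "\<exists>D. finite D \<and> (\<forall>\<omega>'. \<omega>' \<in> cyl D \<omega> \<longrightarrow> P \<omega>')"
proof -
  obtain S where S: "openin Otop S" "\<omega> \<in> S" "\<forall>\<omega>'\<in>S. P \<omega>'"
    using assms unfolding eventually_nhdsin by (auto simp: Otop_def)
  then obtain U where U: "finite {i. U i \<noteq> UNIV}" "\<omega> \<in> PiE UNIV U" "PiE UNIV U \<subseteq> S"
    unfolding Otop_def openin_product_topology_alt by auto
  have "\<omega>' \<in> S" if "\<omega>' \<in> cyl {i. U i \<noteq> UNIV} \<omega>" for \<omega>'
  proof -
    have "\<omega>' i \<in> U i" for i
      using that U(2) by (cases "U i = UNIV") (auto simp: cyl_def PiE_iff)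
    then show ?thesis using U(3) by (auto simp: PiE_iff)
  qed
  then show ?thesis using U(1) S(3) by blast
qed

locale nonnull_spec =
  fixes \<gamma> :: "('e::finite, 'd::finite) spec"
  assumes is_spec: "is_specification \<gamma>"
begin

lemma prob_space_kernel: "finS L \<Longrightarrow> prob_space (\<gamma> L \<omega>)"
  using is_spec unfolding is_specification_def by blast

lemma sets_kernel: "finS L \<Longrightarrow> sets (\<gamma> L \<omega>) = sets Omega"
  using is_spec unfolding is_specification_def by blast

lemma space_kernel: "finS L \<Longrightarrow> space (\<gamma> L \<omega>) = UNIV"
  using sets_eq_imp_space_eq[OF sets_kernel] by simp

lemma measurable_kernel_F_on:
  "finS L \<Longrightarrow> A \<in> sets Omega \<Longrightarrow> (\<lambda>\<omega>. measure (\<gamma> L \<omega>) A) \<in> borel_measurable (F_on (- L))"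
  using is_spec unfolding is_specification_def by blast

lemma measurable_kernel:
  "finS L \<Longrightarrow> A \<in> sets Omega \<Longrightarrow> (\<lambda>\<omega>. measure (\<gamma> L \<omega>) A) \<in> borel_measurable Omega"
  using measurable_kernel_F_on measurable_F_on_imp_Omega by blast

lemma kernel_proper: "finS L \<Longrightarrow> B \<in> sets (F_on (- L)) \<Longrightarrow> measure (\<gamma> L \<omega>) B = indicator B \<omega>"
  using is_spec unfolding is_specification_def by blast

lemma kernel_consistent:
  "finS L \<Longrightarrow> finS L' \<Longrightarrow> L \<subseteq> L' \<Longrightarrow> A \<in> sets Omega \<Longrightarrow>
     (\<integral>\<omega>'. measure (\<gamma> L \<omega>') A \<partial>\<gamma> L' \<omega>) = measure (\<gamma> L' \<omega>) A"
  using is_spec unfolding is_specification_def by blast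

lemma kernel_le_1: "finS L \<Longrightarrow> measure (\<gamma> L \<omega>) A \<le> 1"
  using prob_space.prob_le_1[OF prob_space_kernel] by blast

lemma kernel_local:
  "finS L \<Longrightarrow> A \<in> sets Omega \<Longrightarrow> (\<And>y. y \<notin> L \<Longrightarrow> \<omega> y = \<omega>' y) \<Longrightarrow>
     measure (\<gamma> L \<omega>) A = measure (\<gamma> L \<omega>') A"
  by (rule F_on_measurable_local[OF measurable_kernel_F_on]) auto

lemma kernel_nonnull: "finS L \<Longrightarrow> \<exists>a>0. \<forall>\<sigma> \<eta>. a \<le> measure (\<gamma> L \<eta>) (cyl L \<sigma>)"
proof -
  assume "finS L"
  then obtain a where a: "0 < a" "a < (INF \<sigma>. INF \<eta>. measure (\<gamma> L \<eta>) (cyl L \<sigma>))"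
    using is_spec unfolding is_specification_def by blast
  have bdd: "bdd_below (range (\<lambda>\<eta>. measure (\<gamma> L \<eta>) (cyl L \<sigma>)))" for \<sigma>
    by (rule bdd_belowI[of _ 0]) auto
  have "bdd_below (range (\<lambda>\<sigma>. INF \<eta>. measure (\<gamma> L \<eta>) (cyl L \<sigma>)))"
    by (rule bdd_belowI[of _ 0]) (auto intro!: cINF_greatest)
  then have "(INF \<sigma>. INF \<eta>. measure (\<gamma> L \<eta>) (cyl L \<sigma>)) \<le> (INF \<eta>. measure (\<gamma> L \<eta>) (cyl L \<sigma>))" for \<sigma>
    by (rule cINF_lower) simp
  then have "(INF \<sigma>. INF \<eta>. measure (\<gamma> L \<eta>) (cyl L \<sigma>)) \<le> measure (\<gamma> L \<eta>) (cyl L \<sigma>)" for \<sigma> \<eta>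
    using cINF_lower[OF bdd, of \<eta>] order_trans by blast
  then show ?thesis using a by (meson less_imp_le order_trans)
qed

lemma kernel_cyl_pos: "finS L \<Longrightarrow> 0 < measure (\<gamma> L \<eta>) (cyl L \<sigma>)"
  using kernel_nonnull by (meson less_le_trans)

lemma AE_kernel_boundary: "finS L \<Longrightarrow> AE \<omega>' in \<gamma> L \<omega>. \<forall>y. y \<notin> L \<longrightarrow> \<omega>' y = \<omega> y"
proof -
  assume L: "finS L"
  have "AE \<omega>' in \<gamma> L \<omega>. y \<notin> L \<longrightarrow> \<omega>' y = \<omega> y" for y
  proof (cases "y \<in> L")
    case False
    then have "cyl {y} \<omega> \<in> sets (F_on (- L))" by (intro cyl_in_F_on) auto
    then have "measure (\<gamma> L \<omega>) (cyl {y} \<omega>) = 1"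
      using kernel_proper[OF L] by simp
    then have "AE \<omega>' in \<gamma> L \<omega>. \<omega>' \<in> cyl {y} \<omega>"
      using prob_space.prob_eq_1[OF prob_space_kernel[OF L]] sets_kernel[OF L] by simp
    then show ?thesis by (auto simp: cyl_def)
  qed simp
  then show ?thesis by (subst AE_all_countable) auto
qed

text \<open>Under each \<open>\<gamma>\<^bsub>{x}\<^esub>(\<cdot> | \<omega>')\<close>, the event fixing \<open>\<Lambda> - {x}\<close> has probability
  0 or 1 by properness; consistency therefore splits off the single-site kernel.\<close>

lemma kernel_cyl_split:
  assumes L: "finS \<Lambda>" and x: "x \<in> \<Lambda>" and outside: "\<And>y. y \<notin> \<Lambda> \<Longrightarrow> \<eta> y = \<omega> y"
  shows "measure (\<gamma> \<Lambda> \<omega>) (cyl \<Lambda> \<eta>)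
       = measure (\<gamma> {x} \<eta>) (cyl {x} \<eta>) * measure (\<gamma> \<Lambda> \<omega>) (cyl (\<Lambda> - {x}) \<eta>)"
proof -
  define B where "B = cyl (\<Lambda> - {x}) \<eta>"
  have finL: "finite \<Lambda>" using L by (simp add: finS_def)
  have BF: "B \<in> sets (F_on (- {x}))" unfolding B_def by (rule cyl_in_F_on) (use finL in auto)
  then have BO: "B \<in> sets Omega" using sets_F_on_subset_Omega by blast
  have cyl_eq: "cyl \<Lambda> \<eta> = B \<inter> cyl {x} \<eta>" unfolding B_def cyl_def using x by auto
  have "measure (\<gamma> \<Lambda> \<omega>) (cyl \<Lambda> \<eta>) = (\<integral>\<omega>'. measure (\<gamma> {x} \<omega>') (cyl \<Lambda> \<eta>) \<partial>\<gamma> \<Lambda> \<omega>)"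
    using L x finL by (intro kernel_consistent[symmetric]) auto
  also have "\<dots> = (\<integral>\<omega>'. indicator B \<omega>' * measure (\<gamma> {x} \<eta>) (cyl {x} \<eta>) \<partial>\<gamma> \<Lambda> \<omega>)"
  proof (rule integral_cong_AE)
    show "(\<lambda>\<omega>'. measure (\<gamma> {x} \<omega>') (cyl \<Lambda> \<eta>)) \<in> borel_measurable (\<gamma> \<Lambda> \<omega>)"
      using measurable_kernel[of "{x}"] finL sets_kernel[OF L] by (simp cong: measurable_cong_sets)
    show "(\<lambda>\<omega>'. indicator B \<omega>' * measure (\<gamma> {x} \<eta>) (cyl {x} \<eta>)) \<in> borel_measurable (\<gamma> \<Lambda> \<omega>)"
      using BO sets_kernel[OF L] by measurable
    show "AE \<omega>' in \<gamma> \<Lambda> \<omega>. measure (\<gamma> {x} \<omega>') (cyl \<Lambda> \<eta>) = indicator B \<omega>' * measure (\<gamma> {x} \<eta>) (cyl {x} \<eta>)"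
      using AE_kernel_boundary[OF L]
    proof eventually_elim
      case (elim \<omega>')
      have split: "measure (\<gamma> {x} \<omega>') (cyl \<Lambda> \<eta>) = indicator B \<omega>' * measure (\<gamma> {x} \<omega>') (cyl {x} \<eta>)"
        unfolding cyl_eq using BO BF sets_kernel kernel_proper[OF _ BF]
        by (intro prob_space.prob_Int_trivial_event prob_space_kernel) auto
      show ?case
      proof (cases "\<omega>' \<in> B")
        case True
        then have "\<omega>' y = \<eta> y" if "y \<notin> {x}" for y
          using that elim outside unfolding B_def cyl_def by (cases "y \<in> \<Lambda>") auto
        then have "measure (\<gamma> {x} \<omega>') (cyl {x} \<eta>) = measure (\<gamma> {x} \<eta>) (cyl {x} \<eta>)"
          by (intro kernel_local) auto
        then show ?thesis using split by simp
      qed (simp add: split)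
    qed
  qed
  also have "\<dots> = measure (\<gamma> {x} \<eta>) (cyl {x} \<eta>) * measure (\<gamma> \<Lambda> \<omega>) B"
    using BO sets_kernel[OF L] prob_space_kernel[OF L] by simp
  finally show ?thesis unfolding B_def .
qed

lemma ln_kernel_cyl_ratio_single_site:
  assumes L: "finS \<Lambda>" and x: "x \<in> \<Lambda>" and outside: "\<And>y. y \<notin> \<Lambda> \<Longrightarrow> \<eta> y = \<omega> y"
    and off_x: "\<And>y. y \<noteq> x \<Longrightarrow> \<eta>' y = \<eta> y"
  shows "ln (measure (\<gamma> \<Lambda> \<omega>) (cyl \<Lambda> \<eta>)) - ln (measure (\<gamma> \<Lambda> \<omega>) (cyl \<Lambda> \<eta>'))
       = ln (measure (\<gamma> {x} \<eta>) (cyl {x} \<eta>) / measure (\<gamma> {x} \<eta>) (cyl {x} \<eta>'))"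
proof -
  define c where "c = measure (\<gamma> {x} \<eta>) (cyl {x} \<eta>)"
  define c' where "c' = measure (\<gamma> {x} \<eta>) (cyl {x} \<eta>')"
  define M where "M = measure (\<gamma> \<Lambda> \<omega>) (cyl (\<Lambda> - {x}) \<eta>)"
  have "measure (\<gamma> {x} \<eta>') (cyl {x} \<eta>') = c'"
    unfolding c'_def using off_x by (intro kernel_local) auto
  moreover have "cyl (\<Lambda> - {x}) \<eta>' = cyl (\<Lambda> - {x}) \<eta>"
    using off_x by (intro cyl_cong) auto
  moreover have "\<eta>' y = \<omega> y" if "y \<notin> \<Lambda>" for y
    using that x outside off_x by (metis)
  ultimately have split: "measure (\<gamma> \<Lambda> \<omega>) (cyl \<Lambda> \<eta>) = c * M" "measure (\<gamma> \<Lambda> \<omega>) (cyl \<Lambda> \<eta>') = c' * M"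
    using kernel_cyl_split[OF L x, of \<eta> \<omega>] kernel_cyl_split[OF L x, of \<eta>' \<omega>] outside
    unfolding c_def M_def by auto
  have "0 < c" "0 < c'"
    unfolding c_def c'_def by (simp_all add: kernel_cyl_pos)
  moreover have "0 < c * M"
    using kernel_cyl_pos[OF L] split(1) by metis
  ultimately have "0 < M" by (simp add: zero_less_mult_iff)
  with \<open>0 < c\<close> \<open>0 < c'\<close> show ?thesis
    unfolding split c_def[symmetric] c'_def[symmetric] by (simp add: ln_mult ln_div)
qed

lemma integrable_kernel:
  "prob_space \<nu> \<Longrightarrow> sets \<nu> = sets Omega \<Longrightarrow> finS L \<Longrightarrow> A \<in> sets Omega \<Longrightarrow>
     integrable \<nu> (\<lambda>\<omega>. measure (\<gamma> L \<omega>) A)"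
  using measurable_kernel kernel_le_1
  by (intro finite_measure.integrable_const_bound[OF prob_space.axioms(1), where B=1])
     (auto cong: measurable_cong_sets)

lemma Gibbs_measure_eq_integral:
  assumes \<nu>: "\<nu> \<in> Gibbs \<gamma>" and L: "finS L" and A: "A \<in> sets Omega"
  shows "measure \<nu> A = (\<integral>\<omega>. measure (\<gamma> L \<omega>) A \<partial>\<nu>)"
proof -
  have P: "prob_space \<nu>" and S: "sets \<nu> = sets Omega"
    and ae: "AE \<omega> in \<nu>. real_cond_exp \<nu> (F_on (- L)) (indicator A) \<omega> = measure (\<gamma> L \<omega>) A"
    using assms unfolding Gibbs_def by auto
  have space: "space \<nu> = UNIV" using sets_eq_imp_space_eq[OF S] by simp
  have "subalgebra \<nu> (F_on (- L))"
    unfolding subalgebra_def using sets_F_on_subset_Omega S space by auto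
  then interpret finite_measure_subalgebra \<nu> "F_on (- L)"
    unfolding finite_measure_subalgebra_def finite_measure_subalgebra_axioms_def
    using prob_space.axioms(1)[OF P] by blast
  have "integrable \<nu> (indicator A :: _ \<Rightarrow> real)"
    using A S by (intro integrable_real_indicator) (auto simp: less_top[symmetric])
  then have "measure \<nu> A = (\<integral>\<omega>. real_cond_exp \<nu> (F_on (- L)) (indicator A) \<omega> \<partial>\<nu>)"
    using real_cond_exp_int(2) space by simp
  also have "\<dots> = (\<integral>\<omega>. measure (\<gamma> L \<omega>) A \<partial>\<nu>)"
  proof (rule integral_cong_AE)
    show "(\<lambda>\<omega>. measure (\<gamma> L \<omega>) A) \<in> borel_measurable \<nu>"
      using measurable_kernel[OF L A] measurable_cong_sets[OF S refl] by blast
  qed (use ae in auto)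
  finally show ?thesis .
qed

lemma Gibbs_cyl_pos:
  assumes \<nu>: "\<nu> \<in> Gibbs \<gamma>" and L: "finS L"
  shows "0 < measure \<nu> (cyl L \<theta>)"
proof -
  obtain a where a: "0 < a" "\<And>\<sigma> \<eta>. a \<le> measure (\<gamma> L \<eta>) (cyl L \<sigma>)"
    using kernel_nonnull[OF L] by blast
  have P: "prob_space \<nu>" and S: "sets \<nu> = sets Omega"
    using \<nu> unfolding Gibbs_def by auto
  have "a = (\<integral>\<omega>. a \<partial>\<nu>)"
    using prob_space.prob_space[OF P] by simp
  also have "\<dots> \<le> (\<integral>\<omega>. measure (\<gamma> L \<omega>) (cyl L \<theta>) \<partial>\<nu>)"
    using a L P S finite_measure.integrable_const[OF prob_space.axioms(1)[OF P]]
    by (intro integral_mono integrable_kernel) (auto simp: finS_def)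
  also have "\<dots> = measure \<nu> (cyl L \<theta>)"
    using L by (intro Gibbs_measure_eq_integral[OF \<nu>, symmetric]) (auto simp: finS_def)
  finally show ?thesis using a by simp
qed

lemma Omega_gamma_kernel_continuous:
  assumes \<omega>: "\<omega> \<in> Omega_gamma \<gamma>" and L: "finS L" and A: "A \<in> sets (F_on D')" "finite D'"
    and "0 < \<delta>"
  shows "\<exists>D. finite D \<and> (\<forall>\<omega>'. \<omega>' \<in> cyl D \<omega> \<longrightarrow> \<bar>measure (\<gamma> L \<omega>') A - measure (\<gamma> L \<omega>) A\<bar> < \<delta>)"
proof -
  have "local_fun (indicator A :: ('e, 'd) config \<Rightarrow> real)"
    unfolding local_fun_def using A by (intro exI[of _ D']) auto
  then have "limitin euclideanreal (\<lambda>\<omega>'. \<integral>\<xi>. indicator A \<xi> \<partial>\<gamma> L \<omega>') (\<integral>\<xi>. indicator A \<xi> \<partial>\<gamma> L \<omega>)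
      (nhdsin Otop \<omega>)"
    using \<omega> L unfolding Omega_gamma_def by blast
  then have "limitin euclideanreal (\<lambda>\<omega>'. measure (\<gamma> L \<omega>') A) (measure (\<gamma> L \<omega>) A) (nhdsin Otop \<omega>)"
    using L by (simp add: space_kernel)
  then have "eventually (\<lambda>\<omega>'. measure (\<gamma> L \<omega>') A \<in> ball (measure (\<gamma> L \<omega>) A) \<delta>) (nhdsin Otop \<omega>)"
    using \<open>0 < \<delta>\<close> by (intro limitinD) auto
  from eventually_nhdsin_Otop_cyl[OF this] show ?thesis
    by (auto simp: dist_real_def abs_minus_commute)
qed

end

section \<open>Telescoping along the lexicographic order\<close>

definition splice :: "'e \<Rightarrow> (int ^ 'd) set \<Rightarrow> ('e, 'd) config \<Rightarrow> ('e, 'd) config \<Rightarrow> (int ^ 'd) set \<Rightarrow> ('e, 'd) config"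
  where "splice p \<Lambda> \<sigma> \<omega> S = (\<lambda>y. if y \<in> S then \<sigma> y else if y \<in> \<Lambda> then p else \<omega> y)"

definition site_log_ratio :: "('e, 'd::finite) spec \<Rightarrow> 'e \<Rightarrow> int ^ 'd \<Rightarrow> ('e, 'd) config \<Rightarrow> real"
  where "site_log_ratio \<gamma> p x \<zeta> = ln (measure (\<gamma> {x} \<zeta>) (cyl {x} \<zeta>) / measure (\<gamma> {x} \<zeta>) (cyl {x} (\<lambda>_. p)))"

lemma telescoping:
  fixes \<gamma> :: "('e::finite, 'd::{finite,linorder}) spec"
  assumes "nonnull_spec \<gamma>" and L: "finS \<Lambda>" and "S \<subseteq> \<Lambda>"
  shows "ln (measure (\<gamma> \<Lambda> \<omega>) (cyl \<Lambda> (splice p \<Lambda> \<sigma> \<omega> S))) - ln (measure (\<gamma> \<Lambda> \<omega>) (cyl \<Lambda> (\<lambda>_. p)))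
     = (\<Sum>x\<in>S. site_log_ratio \<gamma> p x (splice p \<Lambda> \<sigma> \<omega> {y\<in>S. lex_le y x}))"
proof -
  interpret nonnull_spec \<gamma> by fact
  define \<eta> where "\<eta> = splice p \<Lambda> \<sigma> \<omega>"
  define lnP where "lnP S = ln (measure (\<gamma> \<Lambda> \<omega>) (cyl \<Lambda> (\<eta> S)))" for S
  have "finite S" using assms L by (auto simp: finS_def intro: finite_subset)
  then have "S \<subseteq> \<Lambda> \<longrightarrow> lnP S - lnP {} = (\<Sum>x\<in>S. site_log_ratio \<gamma> p x (\<eta> {y\<in>S. lex_le y x}))"
  proof (induction S rule: lex.finite_linorder_max_induct)
    case (insert b A)
    show ?case
    proof
      assume bA: "insert b A \<subseteq> \<Lambda>"
      have "b \<notin> A" using insert.hyps(2) by blast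
      have "lnP (insert b A) - lnP A
          = ln (measure (\<gamma> {b} (\<eta> (insert b A))) (cyl {b} (\<eta> (insert b A)))
              / measure (\<gamma> {b} (\<eta> (insert b A))) (cyl {b} (\<eta> A)))"
        unfolding lnP_def using bA \<open>b \<notin> A\<close>
        by (intro ln_kernel_cyl_ratio_single_site L) (auto simp: \<eta>_def splice_def)
      also have "cyl {b} (\<eta> A) = cyl {b} (\<lambda>_. p)"
        using bA \<open>b \<notin> A\<close> by (intro cyl_cong) (auto simp: \<eta>_def splice_def)
      finally have step: "lnP (insert b A) - lnP A = site_log_ratio \<gamma> p b (\<eta> (insert b A))"
        unfolding site_log_ratio_def .
      have "{y \<in> insert b A. lex_le y b} = insert b A"
        using insert.hyps(2) by auto
      moreover have "{y \<in> insert b A. lex_le y x} = {y \<in> A. lex_le y x}" if "x \<in> A" for x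
        using insert.hyps(2) that lex_le_antisym by auto
      ultimately have "(\<Sum>x\<in>insert b A. site_log_ratio \<gamma> p x (\<eta> {y \<in> insert b A. lex_le y x}))
          = site_log_ratio \<gamma> p b (\<eta> (insert b A))
            + (\<Sum>x\<in>A. site_log_ratio \<gamma> p x (\<eta> {y \<in> A. lex_le y x}))"
        using insert.hyps(1) \<open>b \<notin> A\<close> by simp
      then show "lnP (insert b A) - lnP {} = (\<Sum>x\<in>insert b A. site_log_ratio \<gamma> p x (\<eta> {y \<in> insert b A. lex_le y x}))"
        using step insert.IH bA by simp
    qed
  qed simp
  moreover have "cyl \<Lambda> (\<eta> {}) = cyl \<Lambda> (\<lambda>_. p)"
    by (intro cyl_cong) (simp add: \<eta>_def splice_def)
  ultimately show ?thesis using assms unfolding lnP_def \<eta>_def by simp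
qed

section \<open>The single-site function and its oscillation\<close>

lemma abs_ln_diff_le:
  fixes a u v :: real
  assumes "0 < a" "a \<le> u" "a \<le> v"
  shows "\<bar>ln u - ln v\<bar> \<le> \<bar>u - v\<bar> / a"
proof -
  have *: "ln s - ln t \<le> \<bar>s - t\<bar> / a" if "a \<le> s" "a \<le> t" for s t
  proof -
    have "ln s - ln t = ln (s / t)" using that assms by (simp add: ln_div)
    also have "\<dots> \<le> s / t - 1" using that assms by (intro ln_le_minus_one) auto
    also have "\<dots> = (s - t) / t" using that assms by (simp add: field_simps)
    also have "\<dots> \<le> \<bar>s - t\<bar> / a" using that assms by (simp add: frac_le)
    finally show ?thesis .
  qed
  show ?thesis using *[of u v] *[of v u] assms by (auto simp: abs_minus_commute)
qed

lemma tau_splice_in_cyl: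
  fixes x :: "int ^ 'd::{finite,linorder}"
  assumes "R \<le> n" "x \<in> Lam (n - R)"
  shows "tau x (splice p (Lam n) \<sigma> \<omega> {y \<in> Lam n. lex_le y x}) \<in> cyl (Lam R) (plus_ext p (tau x \<sigma>))"
  using Lam_add[OF assms] lex_le_translate_0[of x]
  by (auto simp: cyl_def tau_def splice_def plus_ext_def)

locale tinv_spec = nonnull_spec \<gamma> for \<gamma> :: "('e::finite, 'd::{finite,linorder}) spec" +
  fixes p :: 'e
  assumes tinv: "spec_translation_invariant \<gamma>"
begin

abbreviation F :: "('e, 'd) config \<Rightarrow> real" where
  "F \<equiv> site_log_ratio \<gamma> p 0"

lemma site_log_ratio_translate: "site_log_ratio \<gamma> p x \<zeta> = F (tau x \<zeta>)"
proof -
  have "measure (\<gamma> {x} \<omega>) (cyl {x} \<theta>) = measure (\<gamma> {0} (tau x \<omega>)) (cyl {0} (tau x \<theta>))" for \<omega> \<theta>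
    using tinv[unfolded spec_translation_invariant_def, rule_format, of "{0}" "cyl {x} \<theta>" x]
    by (simp add: tau_image_cyl_singleton)
  then show ?thesis unfolding site_log_ratio_def by simp
qed

lemma F_eq: "F \<zeta> = ln (measure (\<gamma> {0} \<zeta>) (cyl {0} \<zeta>)) - ln (measure (\<gamma> {0} \<zeta>) (cyl {0} (\<lambda>_. p)))"
  unfolding site_log_ratio_def
  using kernel_cyl_pos[of "{0}" \<zeta> \<zeta>] kernel_cyl_pos[of "{0}" \<zeta> "\<lambda>_. p"] by (simp add: ln_div)

lemma F_bounded: "bdd_above (range (\<lambda>\<zeta>. \<bar>F \<zeta>\<bar>))"
proof -
  obtain a where a: "0 < a" "\<And>\<sigma> \<eta>. a \<le> measure (\<gamma> {0} \<eta>) (cyl {0} \<sigma>)"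
    using kernel_nonnull[of "{0}"] by auto
  have "ln a \<le> ln (measure (\<gamma> {0} \<eta>) (cyl {0} \<sigma>)) \<and> ln (measure (\<gamma> {0} \<eta>) (cyl {0} \<sigma>)) \<le> 0" for \<sigma> \<eta>
    using a kernel_le_1[of "{0}"] kernel_cyl_pos[of "{0}"] by auto
  then have "\<bar>F \<zeta>\<bar> \<le> - ln a" for \<zeta>
    unfolding F_eq by (smt (verit))
  then show ?thesis by (intro bdd_aboveI2)
qed

definition F_sup :: real where
  "F_sup = (SUP \<zeta>. \<bar>F \<zeta>\<bar>)"

lemma abs_F_le: "\<bar>F \<zeta>\<bar> \<le> F_sup"
  unfolding F_sup_def using F_bounded by (intro cSUP_upper) simp_all

lemma measurable_F [measurable]: "F \<in> borel_measurable Omega"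
proof -
  have kernel_const: "(\<lambda>\<omega>. measure (\<gamma> {0} \<omega>) (cyl {0} (\<lambda>_. e))) \<in> borel_measurable Omega" for e
    by (rule measurable_kernel) simp_all
  have "(\<lambda>\<omega>. (\<lambda>e \<omega>. measure (\<gamma> {0} \<omega>) (cyl {0} (\<lambda>_. e))) (\<omega> 0) \<omega>) \<in> borel_measurable Omega"
    by (rule measurable_compose_countable'[OF kernel_const measurable_coordinate_Omega]) simp
  moreover have "cyl {0} (\<lambda>_. \<omega> 0) = cyl {0} \<omega>" for \<omega> :: "('e, 'd) config"
    by (auto simp: cyl_def)
  ultimately have "(\<lambda>\<omega>. measure (\<gamma> {0} \<omega>) (cyl {0} \<omega>)) \<in> borel_measurable Omega"
    by simp
  then show ?thesis
    unfolding site_log_ratio_def using kernel_const by measurable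
qed

lemma F_continuous_at:
  assumes \<omega>: "\<omega> \<in> Omega_gamma \<gamma>" and "0 < \<epsilon>"
  shows "\<exists>R. \<forall>\<omega>'\<in>cyl (Lam R) \<omega>. \<bar>F \<omega>' - F \<omega>\<bar> \<le> \<epsilon>"
proof -
  obtain a where a: "0 < a" "\<And>\<sigma> \<eta>. a \<le> measure (\<gamma> {0} \<eta>) (cyl {0} \<sigma>)"
    using kernel_nonnull[of "{0}"] by auto
  define \<delta> where "\<delta> = \<epsilon> * a / 2"
  have "0 < \<delta>" unfolding \<delta>_def using \<open>0 < \<epsilon>\<close> a(1) by simp
  have "\<exists>D. finite D \<and> (\<forall>\<omega>'\<in>cyl D \<omega>.
      \<bar>measure (\<gamma> {0} \<omega>') (cyl {0} \<theta>) - measure (\<gamma> {0} \<omega>) (cyl {0} \<theta>)\<bar> < \<delta>)" for \<theta>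
  proof -
    have "cyl {0} \<theta> \<in> sets (F_on {0})" by (rule cyl_in_F_on) auto
    from Omega_gamma_kernel_continuous[OF \<omega> finS_singleton[of 0] this _ \<open>0 < \<delta>\<close>] show ?thesis by auto
  qed
  then obtain D1 D2 where D: "finite D1" "finite D2"
    and D1: "\<forall>\<omega>'\<in>cyl D1 \<omega>. \<bar>measure (\<gamma> {0} \<omega>') (cyl {0} \<omega>) - measure (\<gamma> {0} \<omega>) (cyl {0} \<omega>)\<bar> < \<delta>"
    and D2: "\<forall>\<omega>'\<in>cyl D2 \<omega>. \<bar>measure (\<gamma> {0} \<omega>') (cyl {0} (\<lambda>_. p)) - measure (\<gamma> {0} \<omega>) (cyl {0} (\<lambda>_. p))\<bar> < \<delta>"
    by meson
  obtain R where R: "D1 \<union> D2 \<subseteq> Lam R"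
    using finite_subset_Lam[of "D1 \<union> D2"] D by blast
  have "\<bar>F \<omega>' - F \<omega>\<bar> \<le> \<epsilon>" if \<omega>': "\<omega>' \<in> cyl (Lam R) \<omega>" for \<omega>'
  proof -
    have "cyl {0} \<omega>' = cyl {0} \<omega>"
      using \<omega>' by (intro cyl_cong) (auto simp: cyl_def)
    moreover have "\<omega>' \<in> cyl D1 \<omega>" "\<omega>' \<in> cyl D2 \<omega>"
      using \<omega>' R cyl_antimono by blast+
    ultimately have "\<bar>F \<omega>' - F \<omega>\<bar>
        \<le> \<bar>ln (measure (\<gamma> {0} \<omega>') (cyl {0} \<omega>)) - ln (measure (\<gamma> {0} \<omega>) (cyl {0} \<omega>))\<bar>
          + \<bar>ln (measure (\<gamma> {0} \<omega>') (cyl {0} (\<lambda>_. p))) - ln (measure (\<gamma> {0} \<omega>) (cyl {0} (\<lambda>_. p)))\<bar>"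
      unfolding F_eq by simp
    also have "\<dots> \<le> \<delta> / a + \<delta> / a"
      using D1 D2 \<open>\<omega>' \<in> cyl D1 \<omega>\<close> \<open>\<omega>' \<in> cyl D2 \<omega>\<close> a
      by (intro add_mono order_trans[OF abs_ln_diff_le[OF a(1)]] divide_right_mono) auto
    also have "\<dots> = \<epsilon>" unfolding \<delta>_def using a(1) by simp
    finally show ?thesis .
  qed
  then show ?thesis by blast
qed

definition osc :: "nat \<Rightarrow> ('e, 'd) config \<Rightarrow> real" where
  "osc R \<theta> = (SUP (\<omega>', \<omega>'') \<in> cyl (Lam R) \<theta> \<times> cyl (Lam R) \<theta>. \<bar>F \<omega>' - F \<omega>''\<bar>)"

lemma abs_F_diff_le: "\<bar>F \<omega>' - F \<omega>''\<bar> \<le> 2 * F_sup"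
  using abs_F_le[of \<omega>'] abs_F_le[of \<omega>''] abs_triangle_ineq4[of "F \<omega>'" "F \<omega>''"] by linarith

lemma osc_bdd: "bdd_above ((\<lambda>(\<omega>', \<omega>''). \<bar>F \<omega>' - F \<omega>''\<bar>) ` B)"
  by (rule bdd_aboveI2[of _ _ "2 * F_sup"]) (auto simp: abs_F_diff_le)

lemma osc_upper: "\<omega>' \<in> cyl (Lam R) \<theta> \<Longrightarrow> \<omega>'' \<in> cyl (Lam R) \<theta> \<Longrightarrow> \<bar>F \<omega>' - F \<omega>''\<bar> \<le> osc R \<theta>"
  unfolding osc_def using osc_bdd by (rule cSUP_upper2[of _ _ "(\<omega>', \<omega>'')"]) auto

lemma osc_least: "(\<And>\<omega>' \<omega>''. \<omega>' \<in> cyl (Lam R) \<theta> \<Longrightarrow> \<omega>'' \<in> cyl (Lam R) \<theta> \<Longrightarrow> \<bar>F \<omega>' - F \<omega>''\<bar> \<le> b)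
    \<Longrightarrow> osc R \<theta> \<le> b"
  unfolding osc_def by (rule cSUP_least) (auto intro: self_in_cyl)

lemma osc_nonneg: "0 \<le> osc R \<theta>"
  using osc_upper[OF self_in_cyl self_in_cyl] by simp

lemma osc_le: "osc R \<theta> \<le> 2 * F_sup"
  by (rule osc_least) (rule abs_F_diff_le)

lemma measurable_osc_plus_ext [measurable]: "(\<lambda>\<sigma>. osc R (plus_ext p \<sigma>)) \<in> borel_measurable Omega"
proof (rule measurable_Omega_local[of "Lam R"])
  fix \<sigma> \<sigma>' :: "('e, 'd) config" assume "\<And>x. x \<in> Lam R \<Longrightarrow> \<sigma> x = \<sigma>' x"
  then have "cyl (Lam R) (plus_ext p \<sigma>) = cyl (Lam R) (plus_ext p \<sigma>')"
    by (intro cyl_cong) (simp add: plus_ext_def)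
  then show "osc R (plus_ext p \<sigma>) = osc R (plus_ext p \<sigma>')"
    unfolding osc_def by simp
qed simp_all

lemma osc_tendsto_0:
  assumes "\<theta> \<in> Omega_gamma \<gamma>"
  shows "(\<lambda>R. osc R \<theta>) \<longlonglongrightarrow> 0"
proof (rule LIMSEQ_I)
  fix r :: real assume "0 < r"
  then obtain R0 where R0: "\<forall>\<omega>'\<in>cyl (Lam R0) \<theta>. \<bar>F \<omega>' - F \<theta>\<bar> \<le> r / 3"
    using F_continuous_at[OF assms, of "r / 3"] by auto
  have "osc R \<theta> \<le> 2 * (r / 3)" if "R0 \<le> R" for R
  proof (rule osc_least)
    fix \<omega>' \<omega>'' assume "\<omega>' \<in> cyl (Lam R) \<theta>" "\<omega>'' \<in> cyl (Lam R) \<theta>"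
    then have "\<omega>' \<in> cyl (Lam R0) \<theta>" "\<omega>'' \<in> cyl (Lam R0) \<theta>"
      using cyl_antimono[OF Lam_mono[OF that]] by blast+
    then have "\<bar>F \<omega>' - F \<theta>\<bar> \<le> r / 3" "\<bar>F \<omega>'' - F \<theta>\<bar> \<le> r / 3"
      using R0 by blast+
    then show "\<bar>F \<omega>' - F \<omega>''\<bar> \<le> 2 * (r / 3)"
      unfolding abs_le_iff by linarith
  qed
  then show "\<exists>R0. \<forall>R\<ge>R0. norm (osc R \<theta> - 0) < r"
    using osc_nonneg \<open>0 < r\<close> by (intro exI[of _ R0]) fastforce
qed

definition box_error :: "nat \<Rightarrow> nat \<Rightarrow> ('e, 'd::{finite,linorder}) config \<Rightarrow> real" where
  "box_error R n \<sigma> = (\<Sum>x\<in>Lam (n - R). osc R (plus_ext p (tau x \<sigma>)))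
     + 2 * F_sup * (real (card (Lam n :: (int ^ 'd::{finite,linorder}) set)) - real (card (Lam (n - R) :: (int ^ 'd::{finite,linorder}) set)))"

lemma kernel_log_ratio_approx:
  assumes "R \<le> n"
  shows "\<bar>ln (measure (\<gamma> (Lam n) \<omega>) (cyl (Lam n) \<sigma>) / measure (\<gamma> (Lam n) \<omega>) (cyl (Lam n) (\<lambda>_. p)))
           - (\<Sum>x\<in>Lam n. F (plus_ext p (tau x \<sigma>)))\<bar> \<le> box_error R n \<sigma>"
proof -
  define \<Lambda> where "\<Lambda> = (Lam n :: (int ^ 'd::{finite,linorder}) set)"
  define K where "K = (Lam (n - R) :: (int ^ 'd::{finite,linorder}) set)"
  have KL: "K \<subseteq> \<Lambda>" unfolding K_def \<Lambda>_def by (rule Lam_mono) simp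
  have fin: "finite \<Lambda>" "finite K" unfolding K_def \<Lambda>_def by simp_all
  define \<zeta> where "\<zeta> x = tau x (splice p \<Lambda> \<sigma> \<omega> {y\<in>\<Lambda>. lex_le y x})" for x
  define d where "d x = F (\<zeta> x) - F (plus_ext p (tau x \<sigma>))" for x
  have "cyl \<Lambda> (splice p \<Lambda> \<sigma> \<omega> \<Lambda>) = cyl \<Lambda> \<sigma>"
    by (intro cyl_cong) (simp add: splice_def)
  moreover have "(\<Sum>x\<in>\<Lambda>. site_log_ratio \<gamma> p x (splice p \<Lambda> \<sigma> \<omega> {y\<in>\<Lambda>. lex_le y x})) = (\<Sum>x\<in>\<Lambda>. F (\<zeta> x))"
    unfolding \<zeta>_def by (intro sum.cong refl site_log_ratio_translate)
  ultimately have tel: "ln (measure (\<gamma> \<Lambda> \<omega>) (cyl \<Lambda> \<sigma>) / measure (\<gamma> \<Lambda> \<omega>) (cyl \<Lambda> (\<lambda>_. p)))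
      = (\<Sum>x\<in>\<Lambda>. F (\<zeta> x))"
    using telescoping[OF nonnull_spec_axioms, of \<Lambda> \<Lambda> \<omega> p \<sigma>]
      kernel_cyl_pos[of \<Lambda> \<omega> \<sigma>] kernel_cyl_pos[of \<Lambda> \<omega> "\<lambda>_. p"]
    unfolding \<Lambda>_def by (simp add: ln_div)
  have "\<bar>d x\<bar> \<le> 2 * F_sup" for x
    unfolding d_def by (rule abs_F_diff_le)
  moreover have "\<bar>d x\<bar> \<le> osc R (plus_ext p (tau x \<sigma>))" if "x \<in> K" for x
    unfolding d_def \<zeta>_def \<Lambda>_def
    using tau_splice_in_cyl[OF assms that[unfolded K_def]] by (intro osc_upper) simp_all
  ultimately have "(\<Sum>x\<in>\<Lambda>. \<bar>d x\<bar>) \<le> (\<Sum>x\<in>\<Lambda> - K. 2 * F_sup) + (\<Sum>x\<in>K. osc R (plus_ext p (tau x \<sigma>)))"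
    unfolding sum.subset_diff[OF KL fin(1)] by (intro add_mono sum_mono) auto
  also have "(\<Sum>x\<in>\<Lambda> - K. 2 * F_sup) = 2 * F_sup * (real (card \<Lambda>) - real (card K))"
    using card_Diff_subset[OF fin(2) KL] card_mono[OF fin(1) KL] by (simp add: of_nat_diff)
  finally show ?thesis
    using tel sum_abs[of d \<Lambda>] unfolding d_def box_error_def \<Lambda>_def K_def sum_subtractf by simp
qed

end

section \<open>Gibbs measures\<close>

lemma abs_ln_diff_le_iff:
  fixes t :: real
  assumes "0 < t"
  shows "\<bar>ln t - A\<bar> \<le> B \<longleftrightarrow> exp (A - B) \<le> t \<and> t \<le> exp (A + B)"
proof -
  have "ln t \<le> A + B \<longleftrightarrow> t \<le> exp (A + B)"
    using ln_le_cancel_iff[OF assms exp_gt_zero] by simp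
  then show ?thesis
    using ln_ge_iff[OF assms, of "A - B"] by (auto simp: abs_le_iff)
qed

lemma abs_ln_integral_ratio_le:
  fixes a b :: "'a \<Rightarrow> real"
  assumes "integrable M a" "integrable M b" "\<And>x. 0 < a x" "\<And>x. 0 < b x" "0 < (\<integral>x. b x \<partial>M)"
    and bound: "\<And>x. \<bar>ln (a x / b x) - A\<bar> \<le> B"
  shows "\<bar>ln ((\<integral>x. a x \<partial>M) / (\<integral>x. b x \<partial>M)) - A\<bar> \<le> B"
proof -
  have ab: "exp (A - B) * b x \<le> a x" "a x \<le> exp (A + B) * b x" for x
    using bound[of x] assms(3,4)[of x] by (simp_all add: abs_ln_diff_le_iff field_simps)
  have "(\<integral>x. exp (A - B) * b x \<partial>M) \<le> (\<integral>x. a x \<partial>M)" "(\<integral>x. a x \<partial>M) \<le> (\<integral>x. exp (A + B) * b x \<partial>M)"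
    by (intro integral_mono integrable_mult_right assms(1,2) ab)+
  then have "exp (A - B) * (\<integral>x. b x \<partial>M) \<le> (\<integral>x. a x \<partial>M)" "(\<integral>x. a x \<partial>M) \<le> exp (A + B) * (\<integral>x. b x \<partial>M)"
    by simp_all
  moreover have "0 < (\<integral>x. a x \<partial>M)"
    using calculation(1) assms(5) by (smt (verit) exp_gt_zero mult_pos_pos)
  ultimately show ?thesis
    using assms(5) by (simp add: abs_ln_diff_le_iff field_simps)
qed

context tinv_spec
begin

lemma Gibbs_log_ratio_approx:
  assumes \<nu>: "\<nu> \<in> Gibbs \<gamma>" and "R \<le> n"
  shows "\<bar>ln (measure \<nu> (cyl (Lam n) \<sigma>) / measure \<nu> (cyl (Lam n) (\<lambda>_. p)))
           - (\<Sum>x\<in>Lam n. F (plus_ext p (tau x \<sigma>)))\<bar> \<le> box_error R n \<sigma>"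
proof -
  have P: "prob_space \<nu>" and S: "sets \<nu> = sets Omega"
    using \<nu> unfolding Gibbs_def by auto
  have "measure \<nu> (cyl (Lam n) \<theta>) = (\<integral>\<omega>. measure (\<gamma> (Lam n) \<omega>) (cyl (Lam n) \<theta>) \<partial>\<nu>)" for \<theta>
    by (rule Gibbs_measure_eq_integral[OF \<nu>]) simp_all
  moreover have "0 < measure \<nu> (cyl (Lam n) (\<lambda>_. p))"
    by (rule Gibbs_cyl_pos[OF \<nu>]) simp
  ultimately show ?thesis
    using kernel_log_ratio_approx[OF assms(2)] P S
    by (simp only:) (intro abs_ln_integral_ratio_le integrable_kernel kernel_cyl_pos; simp)
qed

end

section \<open>Averaging against an invariant measure\<close>

locale regular_inv_measure = tinv_spec \<gamma> p
  for \<gamma> :: "('e::finite, 'd::{finite,linorder}) spec" and p :: 'e +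
  fixes \<mu> :: "('e, 'd) config measure"
  assumes inv_prob: "inv_prob \<mu>" and regular: "AE \<sigma> in \<mu>. plus_ext p \<sigma> \<in> Omega_gamma \<gamma>"
begin

lemma prob_space_mu: "prob_space \<mu>" and sets_mu: "sets \<mu> = sets Omega"
  and distr_tau_mu: "distr \<mu> Omega (tau x) = \<mu>"
  using inv_prob unfolding inv_prob_def by auto

lemma measurable_mu: "f \<in> borel_measurable Omega \<Longrightarrow> f \<in> borel_measurable \<mu>"
  using measurable_cong_sets[OF sets_mu refl] by blast

lemma integrable_bounded:
  "f \<in> borel_measurable Omega \<Longrightarrow> (\<And>\<sigma>. \<bar>f \<sigma>\<bar> \<le> B) \<Longrightarrow> integrable \<mu> (f :: _ \<Rightarrow> real)"
  by (rule finite_measure.integrable_const_bound[OF prob_space.axioms(1)[OF prob_space_mu], of f B])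
     (auto intro: measurable_mu)

lemma integrable_const_mu [simp]: "integrable \<mu> (\<lambda>_. c :: real)"
  using finite_measure.integrable_const[OF prob_space.axioms(1)[OF prob_space_mu]] .

lemma measure_space_mu [simp]: "measure \<mu> (space \<mu>) = 1"
  using prob_space.prob_space[OF prob_space_mu] .

lemma integral_tau:
  assumes "f \<in> borel_measurable Omega"
  shows "(\<integral>\<sigma>. f (tau x \<sigma>) \<partial>\<mu>) = (\<integral>\<sigma>. (f \<sigma> :: real) \<partial>\<mu>)"
proof -
  have "tau x \<in> measurable \<mu> Omega"
    using measurable_cong_sets[OF sets_mu refl] measurable_tau by blast
  from integral_distr[OF this assms] show ?thesis
    unfolding distr_tau_mu by simp
qed

lemma rhs_eq_integral_F: "rhs p \<gamma> \<mu> = (\<integral>\<sigma>. F (plus_ext p \<sigma>) \<partial>\<mu>)"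
  unfolding rhs_def site_log_ratio_def ..

definition avg_error :: "nat \<Rightarrow> nat \<Rightarrow> real" where
  "avg_error R n = (\<integral>\<sigma>. osc R (plus_ext p \<sigma>) \<partial>\<mu>)
     + 2 * F_sup * (1 - real (card (Lam (n - R) :: (int ^ 'd::{finite,linorder}) set)) / real (card (Lam n :: (int ^ 'd::{finite,linorder}) set)))"

lemma integrable_F_translate: "integrable \<mu> (\<lambda>\<sigma>. F (plus_ext p (tau x \<sigma>)))"
  by (rule integrable_bounded[of _ F_sup]) (simp_all add: abs_F_le)

lemma integrable_osc_translate: "integrable \<mu> (\<lambda>\<sigma>. osc R (plus_ext p (tau x \<sigma>)))"
  by (rule integrable_bounded[of _ "2 * F_sup"]) (simp_all add: osc_nonneg osc_le)

lemma integrable_box_error: "integrable \<mu> (box_error R n)"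
  unfolding box_error_def
  by (intro Bochner_Integration.integrable_add Bochner_Integration.integrable_sum
      integrable_osc_translate integrable_const_mu)

lemma integral_sum_F_translate:
  "(\<integral>\<sigma>. (\<Sum>x\<in>Lam n. F (plus_ext p (tau x \<sigma>))) \<partial>\<mu>)
     = real (card (Lam n :: (int ^ 'd::{finite,linorder}) set)) * rhs p \<gamma> \<mu>"
  unfolding rhs_eq_integral_F using integrable_F_translate
  by (simp add: integral_tau[where f = "\<lambda>\<sigma>. F (plus_ext p \<sigma>)"])

lemma integral_box_error:
  "(\<integral>\<sigma>. box_error R n \<sigma> \<partial>\<mu>)
     = real (card (Lam (n - R) :: (int ^ 'd::{finite,linorder}) set)) * (\<integral>\<sigma>. osc R (plus_ext p \<sigma>) \<partial>\<mu>)
       + 2 * F_sup * (real (card (Lam n :: (int ^ 'd::{finite,linorder}) set)) - real (card (Lam (n - R) :: (int ^ 'd::{finite,linorder}) set)))"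
  unfolding box_error_def using integrable_osc_translate
  by (simp add: integral_tau[where f = "\<lambda>\<sigma>. osc R (plus_ext p \<sigma>)"])

lemma averaged_approx:
  assumes Q: "Q \<in> borel_measurable Omega"
    and approx: "\<And>\<sigma>. \<bar>Q \<sigma> - (\<Sum>x\<in>Lam n. F (plus_ext p (tau x \<sigma>)))\<bar> \<le> box_error R n \<sigma>"
  shows "\<bar>(1 / real (card (Lam n :: (int ^ 'd::{finite,linorder}) set))) * (\<integral>\<sigma>. Q \<sigma> \<partial>\<mu>) - rhs p \<gamma> \<mu>\<bar>
           \<le> avg_error R n"
proof -
  define N where "N = real (card (Lam n :: (int ^ 'd::{finite,linorder}) set))"
  define k where "k = real (card (Lam (n - R) :: (int ^ 'd::{finite,linorder}) set))"
  define S where "S \<sigma> = (\<Sum>x\<in>Lam n. F (plus_ext p (tau x \<sigma>)))" for \<sigma>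
  define I where "I = (\<integral>\<sigma>. osc R (plus_ext p \<sigma>) \<partial>\<mu>)"
  have "0 < N" unfolding N_def card_Lam by simp
  have "k \<le> N"
    unfolding k_def N_def using card_mono[OF finite_Lam Lam_mono[of "n - R" n]] by simp
  have "0 \<le> I" unfolding I_def by (simp add: osc_nonneg)
  have approx': "\<bar>Q \<sigma> - S \<sigma>\<bar> \<le> box_error R n \<sigma>" for \<sigma>
    unfolding S_def by (rule approx)
  have int_S: "integrable \<mu> S"
    unfolding S_def using integrable_F_translate by simp
  have "integrable \<mu> (\<lambda>\<sigma>. Q \<sigma> - S \<sigma>)"
    by (intro Bochner_Integration.integrable_bound[OF integrable_box_error[of R n]] AE_I2 borel_measurable_diff
        measurable_mu[OF Q] borel_measurable_integrable[OF int_S])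
       (simp add: order_trans[OF approx' abs_ge_self])
  from Bochner_Integration.integrable_add[OF this int_S] have int_Q: "integrable \<mu> Q"
    by simp
  have "\<bar>(\<integral>\<sigma>. Q \<sigma> \<partial>\<mu>) - (\<integral>\<sigma>. S \<sigma> \<partial>\<mu>)\<bar> \<le> (\<integral>\<sigma>. box_error R n \<sigma> \<partial>\<mu>)"
    unfolding Bochner_Integration.integral_diff[OF int_Q int_S, symmetric]
    by (intro order_trans[OF integral_abs_bound] integral_mono approx' integrable_box_error
        Bochner_Integration.integrable_abs Bochner_Integration.integrable_diff int_Q int_S)
  then have "\<bar>(\<integral>\<sigma>. Q \<sigma> \<partial>\<mu>) - N * rhs p \<gamma> \<mu>\<bar> \<le> k * I + 2 * F_sup * (N - k)"
    unfolding S_def integral_sum_F_translate integral_box_error N_def k_def I_def .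
  then have "\<bar>(1 / N) * (\<integral>\<sigma>. Q \<sigma> \<partial>\<mu>) - rhs p \<gamma> \<mu>\<bar> \<le> (k / N) * I + 2 * F_sup * (1 - k / N)"
    using \<open>0 < N\<close> by (simp add: field_simps abs_divide)
  also have "\<dots> \<le> I + 2 * F_sup * (1 - k / N)"
    using mult_right_mono[of "k / N" 1 I] \<open>k \<le> N\<close> \<open>0 < N\<close> \<open>0 \<le> I\<close> by simp
  finally show ?thesis unfolding avg_error_def I_def k_def N_def .
qed

lemma integral_osc_tendsto_0: "(\<lambda>R. \<integral>\<sigma>. osc R (plus_ext p \<sigma>) \<partial>\<mu>) \<longlonglongrightarrow> 0"
proof -
  have "(\<lambda>R. \<integral>\<sigma>. osc R (plus_ext p \<sigma>) \<partial>\<mu>) \<longlonglongrightarrow> (\<integral>\<sigma>. 0 \<partial>\<mu>)"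
  proof (rule integral_dominated_convergence[where w = "\<lambda>_. 2 * F_sup"])
    show "AE \<sigma> in \<mu>. (\<lambda>R. osc R (plus_ext p \<sigma>)) \<longlonglongrightarrow> 0"
      using regular by eventually_elim (rule osc_tendsto_0)
    show "AE \<sigma> in \<mu>. norm (osc R (plus_ext p \<sigma>)) \<le> 2 * F_sup" for R
      by (simp add: osc_nonneg osc_le)
  qed (simp_all add: measurable_mu)
  then show ?thesis by simp
qed

lemma avg_error_small: "0 < e \<Longrightarrow> \<exists>R N. \<forall>n\<ge>N. R \<le> n \<and> avg_error R n < e"
proof -
  assume "0 < e"
  then obtain R where "norm ((\<integral>\<sigma>. osc R (plus_ext p \<sigma>) \<partial>\<mu>) - 0) < e / 2"
    using LIMSEQ_D[OF integral_osc_tendsto_0, of "e / 2"] by auto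
  then have R: "(\<integral>\<sigma>. osc R (plus_ext p \<sigma>) \<partial>\<mu>) < e / 2"
    by (simp add: abs_less_iff)
  have "(\<lambda>n. 2 * F_sup * (1 - real (card (Lam (n - R) :: (int ^ 'd::{finite,linorder}) set))
      / real (card (Lam n :: (int ^ 'd::{finite,linorder}) set)))) \<longlonglongrightarrow> 2 * F_sup * (1 - 1)"
    by (intro tendsto_intros card_Lam_ratio_tendsto_1)
  then obtain N where N: "\<forall>n\<ge>N. 2 * F_sup * (1 - real (card (Lam (n - R) :: (int ^ 'd::{finite,linorder}) set))
      / real (card (Lam n :: (int ^ 'd::{finite,linorder}) set))) < e / 2"
    using LIMSEQ_D[of _ 0 "e / 2"] \<open>0 < e\<close> by (fastforce simp: abs_less_iff)
  have "R \<le> n \<and> avg_error R n < e" if "max N R \<le> n" for n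
    using R N that unfolding avg_error_def by fastforce
  then show ?thesis by blast
qed

lemma uniform_limit_of_box_approx:
  assumes "\<And>n i. Q n i \<in> borel_measurable Omega"
    and "\<And>R n i \<sigma>. R \<le> n \<Longrightarrow> \<bar>Q n i \<sigma> - (\<Sum>x\<in>Lam n. F (plus_ext p (tau x \<sigma>)))\<bar> \<le> box_error R n \<sigma>"
  shows "uniform_limit I (\<lambda>n i. (1 / real (card (Lam n :: (int ^ 'd::{finite,linorder}) set))) * (\<integral>\<sigma>. Q n i \<sigma> \<partial>\<mu>))
           (\<lambda>_. rhs p \<gamma> \<mu>) sequentially"
  unfolding uniform_limit_sequentially_iff
proof (intro allI impI)
  fix e :: real assume "0 < e"
  then obtain R N where RN: "\<forall>n\<ge>N. R \<le> n \<and> avg_error R n < e"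
    using avg_error_small by blast
  have "\<bar>(1 / real (card (Lam n :: (int ^ 'd::{finite,linorder}) set))) * (\<integral>\<sigma>. Q n i \<sigma> \<partial>\<mu>) - rhs p \<gamma> \<mu>\<bar> < e"
    if "N \<le> n" for n i
  proof -
    have "\<bar>(1 / real (card (Lam n :: (int ^ 'd::{finite,linorder}) set))) * (\<integral>\<sigma>. Q n i \<sigma> \<partial>\<mu>) - rhs p \<gamma> \<mu>\<bar>
        \<le> avg_error R n"
      using RN that by (intro averaged_approx assms) auto
    also have "\<dots> < e" using RN that by blast
    finally show ?thesis .
  qed
  then show "\<exists>N. \<forall>n\<ge>N. \<forall>i\<in>I. dist ((1 / real (card (Lam n :: (int ^ 'd::{finite,linorder}) set)))
      * (\<integral>\<sigma>. Q n i \<sigma> \<partial>\<mu>)) (rhs p \<gamma> \<mu>) < e"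
    by (auto simp: dist_real_def)
qed

lemma kernel_average_uniform_limit:
  "uniform_limit UNIV
     (\<lambda>n \<omega>. (1 / real (card (Lam n :: (int ^ 'd::{finite,linorder}) set))) *
        (\<integral>\<sigma>. ln (measure (\<gamma> (Lam n) \<omega>) (cyl (Lam n) \<sigma>) / measure (\<gamma> (Lam n) \<omega>) (cyl (Lam n) (\<lambda>_. p))) \<partial>\<mu>))
     (\<lambda>\<omega>. rhs p \<gamma> \<mu>) sequentially"
  by (intro uniform_limit_of_box_approx measurable_cyl_fun kernel_log_ratio_approx) simp_all

lemma Gibbs_average_tendsto:
  assumes "\<nu> \<in> Gibbs \<gamma>"
  shows "(\<lambda>n. (1 / real (card (Lam n :: (int ^ 'd::{finite,linorder}) set))) *
           (\<integral>\<sigma>. ln (measure \<nu> (cyl (Lam n) \<sigma>) / measure \<nu> (cyl (Lam n) (\<lambda>_. p))) \<partial>\<mu>))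
         \<longlonglongrightarrow> rhs p \<gamma> \<mu>"
proof -
  have "uniform_limit (UNIV :: unit set)
     (\<lambda>n _. (1 / real (card (Lam n :: (int ^ 'd::{finite,linorder}) set))) *
        (\<integral>\<sigma>. ln (measure \<nu> (cyl (Lam n) \<sigma>) / measure \<nu> (cyl (Lam n) (\<lambda>_. p))) \<partial>\<mu>))
     (\<lambda>_. rhs p \<gamma> \<mu>) sequentially"
    by (intro uniform_limit_of_box_approx measurable_cyl_fun Gibbs_log_ratio_approx[OF assms]) simp_all
  from tendsto_uniform_limitI[OF this UNIV_I] show ?thesis .
qed

end

theorem lemma3p7:
  fixes \<gamma> :: "('e::finite, 'd::{finite,linorder}) spec"
    and \<mu> :: "('e, 'd) config measure"
    and p :: 'e
  assumes "is_specification \<gamma>"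
    and "spec_translation_invariant \<gamma>"
    and "inv_prob \<mu>"
    and "AE \<sigma> in \<mu>. plus_ext p \<sigma> \<in> Omega_gamma \<gamma>"
  shows "uniform_limit UNIV
           (\<lambda>n \<omega>. (1 / real (card (Lam n :: (int ^ ('d::{finite,linorder})) set))) *
              (\<integral>\<sigma>. ln (measure (\<gamma> (Lam n) \<omega>) (cyl (Lam n) \<sigma>)
                        / measure (\<gamma> (Lam n) \<omega>) (cyl (Lam n) (\<lambda>_. p))) \<partial>\<mu>))
           (\<lambda>\<omega>. rhs p \<gamma> \<mu>) sequentially
         \<and> (\<forall>\<nu>\<in>Gibbs \<gamma>.
           (\<lambda>n. (1 / real (card (Lam n :: (int ^ ('d::{finite,linorder})) set))) *
              (\<integral>\<sigma>. ln (measure \<nu> (cyl (Lam n) \<sigma>) / measure \<nu> (cyl (Lam n) (\<lambda>_. p))) \<partial>\<mu>))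
           \<longlonglongrightarrow> rhs p \<gamma> \<mu>)"
proof -
  interpret regular_inv_measure \<gamma> p \<mu>
    using assms by unfold_locales
  show ?thesis
    using kernel_average_uniform_limit Gibbs_average_tendsto by blast
qed

end
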